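(* Let $\nu>-1$ and $p,q\in\mathbb{R}$. Then the inequalities $$(1-p)\mathcal{I}_{\nu+1}(x)+p\frac{\mathcal{I}_{\nu+1}(x)}{\mathcal{I}_{\nu}(x)}>1>(1-q)\mathcal{I}_{\nu+1}(x)+q\frac{\mathcal{I}_{\nu+1}(x)}{\mathcal{I}_{\nu}(x)}$$ hold for all $x\in(0,\infty)$ if and only if $p\leq\frac{\nu+1}{\nu+2}$ and $q\geq 1$.
   Context: For $\mu>-1$, $I_\mu(x)=\sum_{n\geq0}\frac{(x/2)^{\mu+2n}}{n!\,\Gamma(\mu+n+1)}$ is the modified Bessel function of the first kind, and $\mathcal{I}_\mu:\mathbb{R}\to[1,\infty)$ is the normalized modified Bessel function $$\mathcal{I}_{\mu}(x)=2^{\mu}\Gamma(\mu+1)x^{-\mu}I_{\mu}(x)=\sum_{n\geq0}\frac{(1/4)^n}{(\mu+1)_n\, n!}x^{2n},$$ where $(\mu+1)_n=\Gamma(\mu+n+1)/\Gamma(\mu+1)$ is the Pochhammer symbol. In particular $\mathcal{I}_{-1/2}(x)=\cosh x$ and $\mathcal{I}_{1/2}(x)=\frac{\sinh x}{x}$. *)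

theory Defs
  imports "HOL-Analysis.Analysis"
begin

text \<open>Normalized modified Bessel function of the first kind, via its power series:
  calI mu x = sum_{n>=0} (1/4)^n / ((mu+1)_n * n!) * x^(2n).\<close>
definition calI :: "real \<Rightarrow> real \<Rightarrow> real" where
  "calI \<mu> x = (\<Sum>n. (1/4) ^ n / (pochhammer (\<mu> + 1) n * fact n) * x ^ (2 * n))"

end

theory Submission
  imports Defs
begin

text \<open>Write \<open>A\<close> and \<open>B\<close> for the normalized Bessel functions of orders \<open>\<nu> + 1\<close> and \<open>\<nu>\<close>
  as power series in \<open>y = x\<^sup>2\<close>. Since \<open>B > 0\<close>, the two inequalities say
  \<open>p \<cdot> A(B - 1) < (A - 1)B < q \<cdot> A(B - 1)\<close>. Comparing the coefficients of the difference
  quotients \<open>(A - 1)/y\<close> and \<open>(B - 1)/y\<close> gives \<open>A < B\<close> and \<open>(\<nu> + 1)(B - A) < (A - 1)B\<close>, from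
  which both inequalities follow when \<open>p \<le> (\<nu> + 1)/(\<nu> + 2)\<close> and \<open>q \<ge> 1\<close>. Conversely the
  ratio \<open>(A - 1)B / (A(B - 1))\<close> tends to \<open>(\<nu> + 1)/(\<nu> + 2)\<close> as \<open>y \<rightarrow> 0\<close>, and it exceeds
  any \<open>q < 1\<close> once \<open>(1 - q)A \<ge> 1\<close>.\<close>

definition bessel_coeff :: "real \<Rightarrow> nat \<Rightarrow> real" where
  "bessel_coeff \<mu> n = (1/4) ^ n / (pochhammer (\<mu> + 1) n * fact n)"

definition bessel_series :: "real \<Rightarrow> real \<Rightarrow> real" where
  "bessel_series \<mu> y = (\<Sum>n. bessel_coeff \<mu> n * y ^ n)"

definition bessel_slope :: "real \<Rightarrow> real \<Rightarrow> real" where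
  "bessel_slope \<mu> y = (\<Sum>n. bessel_coeff \<mu> (Suc n) * y ^ n)"

lemma calI_eq_bessel_series: "calI \<mu> x = bessel_series \<mu> (x\<^sup>2)"
  unfolding calI_def bessel_series_def bessel_coeff_def by (simp add: power_mult)

lemma bessel_coeff_pos: "\<mu> > -1 \<Longrightarrow> bessel_coeff \<mu> n > 0"
  unfolding bessel_coeff_def by (intro divide_pos_pos mult_pos_pos pochhammer_pos) auto

lemma bessel_coeff_0 [simp]: "bessel_coeff \<mu> 0 = 1"
  unfolding bessel_coeff_def by simp

lemma bessel_coeff_1: "bessel_coeff \<mu> 1 = 1 / (4 * (\<mu> + 1))"
  unfolding bessel_coeff_def by simp

lemma bessel_coeff_Suc:
  "bessel_coeff \<mu> (Suc n) = bessel_coeff \<mu> n / (4 * (\<mu> + 1 + n) * (n + 1))"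
  unfolding bessel_coeff_def pochhammer_Suc by (simp add: field_simps)

lemma bessel_coeff_shift:
  assumes "\<mu> > -1"
  shows "bessel_coeff (\<mu> + 1) n * (\<mu> + 1 + n) = bessel_coeff \<mu> n * (\<mu> + 1)"
proof -
  define P1 P2 where "P1 = pochhammer (\<mu> + 1) n" and "P2 = pochhammer (\<mu> + 2) n"
  have rec: "P1 * (\<mu> + 1 + n) = (\<mu> + 1) * P2"
    using pochhammer_rec[of "\<mu> + 1" n] pochhammer_Suc[of "\<mu> + 1" n]
    unfolding P1_def P2_def by (simp add: add.assoc)
  have "P1 > 0" "P2 > 0"
    unfolding P1_def P2_def using assms by (auto intro!: pochhammer_pos)
  then have "(1/4) ^ n / (P2 * fact n) * (\<mu> + 1 + n) = (1/4) ^ n / (P1 * fact n) * (\<mu> + 1)"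
    by (simp add: divide_simps) (metis rec mult.commute)
  then show ?thesis
    unfolding bessel_coeff_def P1_def P2_def by (simp add: add.assoc)
qed

lemma bessel_coeff_Suc_less:
  assumes "\<mu> > -1"
  shows "n * bessel_coeff (\<mu> + 1) (Suc n) < bessel_coeff (\<mu> + 1) 1 * bessel_coeff \<mu> n"
proof -
  define m where "m = \<mu> + 1"
  have m: "m > 0" using assms unfolding m_def by simp
  have b: "bessel_coeff \<mu> n > 0" using bessel_coeff_pos[OF assms] .
  have a: "bessel_coeff (\<mu> + 1) n = bessel_coeff \<mu> n * m / (m + n)"
    using bessel_coeff_shift[OF assms, of n] m unfolding m_def by (simp add: field_simps)
  have "n * m * (m + 1) < (m + n) * (m + 1 + n) * (n + 1)"
  proof -
    have "n * (m * (m + 1)) \<le> n * ((m + n) * (m + 1 + n))"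
      using m by (intro mult_left_mono mult_mono) auto
    also have "\<dots> < (n + 1) * ((m + n) * (m + 1 + n))"
      using m by (intro mult_strict_right_mono) auto
    finally show ?thesis by (simp add: algebra_simps)
  qed
  moreover have "(m + n) * (4 * (m + 1 + n) * (n + 1)) > 0" using m by simp
  ultimately have "n * m / ((m + n) * (4 * (m + 1 + n) * (n + 1))) < 1 / (4 * (m + 1))"
    using m by (simp add: divide_simps algebra_simps)
  from mult_strict_left_mono[OF this b] show ?thesis
    unfolding bessel_coeff_Suc[of "\<mu> + 1"] bessel_coeff_1 a m_def by (simp add: add.assoc mult.left_commute)
qed

lemma summable_bessel_series:
  assumes "\<mu> > -1"
  shows "summable (\<lambda>n. bessel_coeff \<mu> n * y ^ n)"
proof (rule summable_ratio_test[where c = "1/2" and N = "nat \<lceil>\<bar>y\<bar>\<rceil>"])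
  fix n assume "nat \<lceil>\<bar>y\<bar>\<rceil> \<le> n"
  then have "\<bar>y\<bar> \<le> n" by linarith
  then have "\<bar>y\<bar> \<le> (\<mu> + 1 + n) * 1" using assms by simp
  also have "\<dots> \<le> (\<mu> + 1 + n) * (n + 1)" using assms by (intro mult_left_mono) auto
  finally have "\<bar>y\<bar> / (4 * ((\<mu> + 1 + n) * (n + 1))) \<le> 1/2"
    using assms by (simp add: divide_simps mult.commute)
  then have "bessel_coeff \<mu> n * \<bar>y\<bar> ^ n * (\<bar>y\<bar> / (4 * ((\<mu> + 1 + n) * (n + 1))))
      \<le> bessel_coeff \<mu> n * \<bar>y\<bar> ^ n * (1/2)"
    using bessel_coeff_pos[OF assms, of n] by (intro mult_left_mono) auto
  moreover have "norm (bessel_coeff \<mu> (Suc n) * y ^ Suc n)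
      = bessel_coeff \<mu> n * \<bar>y\<bar> ^ n * (\<bar>y\<bar> / (4 * ((\<mu> + 1 + n) * (n + 1))))"
    using bessel_coeff_pos[OF assms, of n] assms
    by (simp add: bessel_coeff_Suc abs_mult power_abs mult_ac)
  ultimately show "norm (bessel_coeff \<mu> (Suc n) * y ^ Suc n) \<le> 1/2 * norm (bessel_coeff \<mu> n * y ^ n)"
    using bessel_coeff_pos[OF assms, of n] by (simp add: abs_mult power_abs)
qed simp

lemma summable_bessel_slope:
  "\<mu> > -1 \<Longrightarrow> summable (\<lambda>n. bessel_coeff \<mu> (Suc n) * y ^ n)"
  using powser_split_head(3)[OF summable_bessel_series] .

lemma bessel_series_eq_slope: "\<mu> > -1 \<Longrightarrow> bessel_series \<mu> y = 1 + y * bessel_slope \<mu> y"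
  using powser_split_head(1)[OF summable_bessel_series]
  unfolding bessel_series_def bessel_slope_def by (simp add: mult.commute)

lemma bessel_slope_0: "bessel_slope \<mu> 0 = bessel_coeff \<mu> 1"
  unfolding bessel_slope_def by simp

lemma bessel_slope_ge:
  assumes "\<mu> > -1" "y \<ge> 0"
  shows "bessel_slope \<mu> y \<ge> bessel_coeff \<mu> 1"
  using sum_le_suminf[OF summable_bessel_slope[OF assms(1)], of "{..<1}"]
    bessel_coeff_pos[OF assms(1)] assms(2)
  unfolding bessel_slope_def by (simp add: less_imp_le)

lemma isCont_bessel_slope: "\<mu> > -1 \<Longrightarrow> isCont (bessel_slope \<mu>) y"
  unfolding bessel_slope_def[abs_def]
  by (rule isCont_powser_converges_everywhere[OF summable_bessel_slope])

lemma bessel_series_ge: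
  assumes "\<mu> > -1" "y \<ge> 0"
  shows "bessel_series \<mu> y \<ge> 1 + bessel_coeff \<mu> 1 * y"
  using bessel_slope_ge[OF assms] assms(2)
  by (simp add: bessel_series_eq_slope[OF assms(1)] mult.commute mult_left_mono)

lemma bessel_series_gt_1: "\<mu> > -1 \<Longrightarrow> y > 0 \<Longrightarrow> bessel_series \<mu> y > 1"
  using bessel_series_ge[of \<mu> y] bessel_coeff_pos[of \<mu> 1] by (smt (verit) mult_pos_pos)

lemma bessel_series_pos: "\<mu> > -1 \<Longrightarrow> y \<ge> 0 \<Longrightarrow> bessel_series \<mu> y > 0"
  using bessel_series_ge[of \<mu> y] bessel_coeff_pos[of \<mu> 1] by (smt (verit) mult_nonneg_nonneg)

lemma bessel_slope_ineq:
  assumes "\<nu> > -1" "y > 0"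
  shows "(\<nu> + 1) * (bessel_slope \<nu> y - bessel_slope (\<nu> + 1) y) > 0"
    and "(\<nu> + 1) * (bessel_slope \<nu> y - bessel_slope (\<nu> + 1) y)
           < bessel_slope (\<nu> + 1) y * bessel_series \<nu> y"
proof -
  have \<nu>1: "\<nu> + 1 > -1" using assms(1) by simp
  define a b where "a = bessel_coeff (\<nu> + 1)" and "b = bessel_coeff \<nu>"
  define A' B' B where "A' = bessel_slope (\<nu> + 1) y" and "B' = bessel_slope \<nu> y"
    and "B = bessel_series \<nu> y"
  have A'_sums: "(\<lambda>n. a (Suc n) * y ^ n) sums A'"
    unfolding a_def A'_def bessel_slope_def by (rule summable_sums[OF summable_bessel_slope[OF \<nu>1]])
  have B'_sums: "(\<lambda>n. b (Suc n) * y ^ n) sums B'"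
    unfolding b_def B'_def bessel_slope_def by (rule summable_sums[OF summable_bessel_slope[OF assms(1)]])
  have B_sums: "(\<lambda>n. b n * y ^ n) sums B"
    unfolding b_def B_def bessel_series_def by (rule summable_sums[OF summable_bessel_series[OF assms(1)]])
  have "(\<nu> + 1) * (b (Suc n) * y ^ n - a (Suc n) * y ^ n) = Suc n * a (Suc n) * y ^ n" for n
  proof -
    have "(\<nu> + 1) * (b (Suc n) * y ^ n - a (Suc n) * y ^ n)
        = y ^ n * (b (Suc n) * (\<nu> + 1)) - y ^ n * (a (Suc n) * (\<nu> + 1))"
      by (simp add: algebra_simps)
    also have "\<dots> = y ^ n * (a (Suc n) * (\<nu> + 1 + Suc n)) - y ^ n * (a (Suc n) * (\<nu> + 1))"
      using bessel_coeff_shift[OF assms(1), of "Suc n"] unfolding a_def b_def by simp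
    finally show ?thesis by (simp add: algebra_simps)
  qed
  then have D_sums: "(\<lambda>n. Suc n * a (Suc n) * y ^ n) sums ((\<nu> + 1) * (B' - A'))"
    using sums_mult[OF sums_diff[OF B'_sums A'_sums], of "\<nu> + 1"] by (simp only:)
  have a_pos: "a n > 0" for n unfolding a_def using bessel_coeff_pos[OF \<nu>1] .
  show "(\<nu> + 1) * (B' - A') > 0"
    using suminf_pos[OF sums_summable[OF D_sums]] a_pos assms(2) sums_unique[OF D_sums] by simp
  txt \<open>The series for \<open>a\<^sub>1 B + A' - (\<nu> + 1)(B' - A')\<close> has first term \<open>a\<^sub>1\<close> and all
    other terms positive; combined with \<open>A' B \<ge> A' + a\<^sub>1 (B - 1)\<close> this gives the claim.\<close>
  have "(\<lambda>n. a 1 * (b n * y ^ n) + (a (Suc n) * y ^ n - Suc n * a (Suc n) * y ^ n))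
      sums (a 1 * B + (A' - (\<nu> + 1) * (B' - A')))"
    by (intro sums_add sums_mult sums_diff B_sums A'_sums D_sums)
  then have T_sums: "(\<lambda>n. (a 1 * b n - n * a (Suc n)) * y ^ n)
      sums (a 1 * B + A' - (\<nu> + 1) * (B' - A'))"
    by (simp add: algebra_simps)
  have "(a 1 * b n - n * a (Suc n)) * y ^ n > 0" for n
    using bessel_coeff_Suc_less[OF assms(1), of n] assms(2) unfolding a_def b_def by simp
  from sum_less_suminf[OF sums_summable[OF T_sums], of 1] this
  have "a 1 < a 1 * B + A' - (\<nu> + 1) * (B' - A')"
    using sums_unique[OF T_sums] unfolding b_def by simp
  moreover have "a 1 * (B - 1) \<le> A' * (B - 1)"
    using bessel_slope_ge[OF \<nu>1, of y] bessel_series_gt_1[OF assms] assms(2)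
    unfolding a_def A'_def B_def by (intro mult_right_mono) auto
  ultimately show "(\<nu> + 1) * (B' - A') < A' * B"
    by (simp add: algebra_simps)
qed

lemma bessel_series_ineqs:
  assumes "\<nu> > -1" "y > 0"
  shows "bessel_series (\<nu> + 1) y < bessel_series \<nu> y"
    and "(\<nu> + 1) * (bessel_series \<nu> y - bessel_series (\<nu> + 1) y)
           < (bessel_series (\<nu> + 1) y - 1) * bessel_series \<nu> y"
proof -
  have \<nu>1: "\<nu> + 1 > -1" using assms(1) by simp
  note slope = bessel_series_eq_slope[OF assms(1)] bessel_series_eq_slope[OF \<nu>1]
  show "bessel_series (\<nu> + 1) y < bessel_series \<nu> y"
    using bessel_slope_ineq(1)[OF assms] assms by (simp add: slope zero_less_mult_iff)
  show "(\<nu> + 1) * (bessel_series \<nu> y - bessel_series (\<nu> + 1) y)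
      < (bessel_series (\<nu> + 1) y - 1) * bessel_series \<nu> y"
    using mult_strict_left_mono[OF bessel_slope_ineq(2)[OF assms] assms(2)]
    unfolding slope by (simp add: algebra_simps)
qed

lemma mixed_ratio_iff_left:
  fixes A B p :: real
  assumes "B > 0"
  shows "(1 - p) * A + p * (A / B) > 1 \<longleftrightarrow> p * (A * (B - 1)) < (A - 1) * B"
  using assms by (simp add: field_simps)

lemma mixed_ratio_iff_right:
  fixes A B q :: real
  assumes "B > 0"
  shows "1 > (1 - q) * A + q * (A / B) \<longleftrightarrow> (A - 1) * B < q * (A * (B - 1))"
  using assms by (simp add: field_simps)

lemma mixed_ratio_bounds:
  fixes A B m p q :: real
  assumes "1 < A" "A < B" "m > 0" "m * (B - A) < (A - 1) * B"
    and "p \<le> m / (m + 1)" "q \<ge> 1"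
  shows "p * (A * (B - 1)) < (A - 1) * B" and "(A - 1) * B < q * (A * (B - 1))"
proof -
  have X: "A * (B - 1) > 0" using assms(1,2) by simp
  have "p * (A * (B - 1)) \<le> m / (m + 1) * (A * (B - 1))"
    using assms(5) X by (intro mult_right_mono) auto
  also have "\<dots> < (A - 1) * B"
  proof -
    have "(m + 1) * ((A - 1) * B) - m * (A * (B - 1)) = (A - 1) * B - m * (B - A)"
      by (simp add: algebra_simps)
    then show ?thesis using assms(1,3,4) by (simp add: field_simps)
  qed
  finally show "p * (A * (B - 1)) < (A - 1) * B" .
  have "(A - 1) * B < A * (B - 1)" using assms(2) by (simp add: algebra_simps)
  also have "\<dots> \<le> q * (A * (B - 1))" using mult_right_mono[OF assms(6), of "A * (B - 1)"] X by simp
  finally show "(A - 1) * B < q * (A * (B - 1))" .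
qed

lemma bessel_left_ineq_fails_near_0:
  assumes "\<nu> > -1" "p > (\<nu> + 1) / (\<nu> + 2)"
  shows "\<exists>y>0. (bessel_series (\<nu> + 1) y - 1) * bessel_series \<nu> y
                 \<le> p * (bessel_series (\<nu> + 1) y * (bessel_series \<nu> y - 1))"
proof -
  have \<nu>1: "\<nu> + 1 > -1" using assms(1) by simp
  txt \<open>\<open>h\<close> is the difference of the two sides divided by \<open>y\<close>, extended continuously to \<open>0\<close>.\<close>
  define h where "h y = bessel_slope (\<nu> + 1) y * (1 + y * bessel_slope \<nu> y)
      - p * ((1 + y * bessel_slope (\<nu> + 1) y) * bessel_slope \<nu> y)" for y
  have "isCont h 0"
    unfolding h_def[abs_def] by (intro continuous_intros isCont_bessel_slope assms(1) \<nu>1)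
  moreover have "h 0 < 0"
  proof -
    have "(\<nu> + 1) / (\<nu> + 2) * (1 / (4 * (\<nu> + 1))) < p * (1 / (4 * (\<nu> + 1)))"
      using assms by (intro mult_strict_right_mono) auto
    moreover have "(\<nu> + 1) / (\<nu> + 2) * (1 / (4 * (\<nu> + 1))) = 1 / (4 * (\<nu> + 1 + 1))"
      using assms(1) by (simp add: divide_simps) (simp add: algebra_simps)
    moreover have "h 0 = 1 / (4 * (\<nu> + 1 + 1)) - p * (1 / (4 * (\<nu> + 1)))"
      unfolding h_def bessel_slope_0 bessel_coeff_1 by simp
    ultimately show ?thesis by linarith
  qed
  ultimately have "eventually (\<lambda>y. h y < 0) (at 0)"
    by (metis isCont_def order_tendstoD(2))
  then obtain d where d: "d > 0" "\<And>y. y \<noteq> 0 \<Longrightarrow> dist y 0 < d \<Longrightarrow> h y < 0"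
    unfolding eventually_at by blast
  define y where "y = d / 2"
  have y: "y > 0" "h y < 0" using d unfolding y_def by auto
  have "(bessel_series (\<nu> + 1) y - 1) * bessel_series \<nu> y
      - p * (bessel_series (\<nu> + 1) y * (bessel_series \<nu> y - 1)) = y * h y"
    unfolding bessel_series_eq_slope[OF assms(1)] bessel_series_eq_slope[OF \<nu>1] h_def
    by (simp add: algebra_simps)
  moreover have "y * h y < 0" using y by (simp add: mult_pos_neg)
  ultimately show ?thesis using y(1) by (intro exI[of _ y]) linarith
qed

lemma bessel_right_ineq_fails_at_infinity:
  assumes "\<nu> > -1" "q < 1"
  shows "\<exists>y>0. q * (bessel_series (\<nu> + 1) y * (bessel_series \<nu> y - 1))
                 \<le> (bessel_series (\<nu> + 1) y - 1) * bessel_series \<nu> y"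
proof -
  have \<nu>1: "\<nu> + 1 > -1" using assms(1) by simp
  define r where "r = max q 0"
  have r: "0 \<le> r" "r < 1" "q \<le> r" using assms(2) unfolding r_def by auto
  define c where "c = bessel_coeff (\<nu> + 1) 1"
  have c: "c > 0" unfolding c_def using bessel_coeff_pos[OF \<nu>1] .
  define y where "y = 1 / (c * (1 - r))"
  have y: "y > 0" unfolding y_def using c r by simp
  define A B where "A = bessel_series (\<nu> + 1) y" and "B = bessel_series \<nu> y"
  have AB: "1 < A" "A < B"
    unfolding A_def B_def using bessel_series_gt_1[OF \<nu>1 y] bessel_series_ineqs(1)[OF assms(1) y] by auto
  have "1 + 1 / (1 - r) \<le> A"
    using bessel_series_ge[OF \<nu>1, of y] y c r unfolding A_def c_def[symmetric] y_def by simp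
  then have "1 \<le> (1 - r) * A"
    using r by (simp add: field_simps)
  then have "B * ((1 - r) * A - 1) + r * A \<ge> 0"
    using AB r by simp
  moreover have "(A - 1) * B - r * (A * (B - 1)) = B * ((1 - r) * A - 1) + r * A"
    by (simp add: algebra_simps)
  ultimately have "r * (A * (B - 1)) \<le> (A - 1) * B" by linarith
  moreover have "q * (A * (B - 1)) \<le> r * (A * (B - 1))"
    using AB r by (intro mult_right_mono) auto
  ultimately show ?thesis using y unfolding A_def B_def by (intro exI[of _ y]) auto
qed

lemma calI_mixed_ratio_iff_left:
  assumes "\<nu> > -1"
  shows "(1 - p) * calI (\<nu> + 1) x + p * (calI (\<nu> + 1) x / calI \<nu> x) > 1 \<longleftrightarrow>
    p * (bessel_series (\<nu> + 1) (x\<^sup>2) * (bessel_series \<nu> (x\<^sup>2) - 1))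
      < (bessel_series (\<nu> + 1) (x\<^sup>2) - 1) * bessel_series \<nu> (x\<^sup>2)"
  unfolding calI_eq_bessel_series by (rule mixed_ratio_iff_left[OF bessel_series_pos[OF assms]]) simp

lemma calI_mixed_ratio_iff_right:
  assumes "\<nu> > -1"
  shows "1 > (1 - q) * calI (\<nu> + 1) x + q * (calI (\<nu> + 1) x / calI \<nu> x) \<longleftrightarrow>
    (bessel_series (\<nu> + 1) (x\<^sup>2) - 1) * bessel_series \<nu> (x\<^sup>2)
      < q * (bessel_series (\<nu> + 1) (x\<^sup>2) * (bessel_series \<nu> (x\<^sup>2) - 1))"
  unfolding calI_eq_bessel_series by (rule mixed_ratio_iff_right[OF bessel_series_pos[OF assms]]) simp

lemma all_pos_square_iff: "(\<forall>x::real>0. P (x\<^sup>2)) \<longleftrightarrow> (\<forall>y>0. P y)"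
  by (metis real_sqrt_gt_zero real_sqrt_pow2 less_imp_le zero_less_power)

lemma bessel_series_mixed_bounds_iff:
  assumes "\<nu> > -1"
  shows "(\<forall>y>0.
      p * (bessel_series (\<nu> + 1) y * (bessel_series \<nu> y - 1))
        < (bessel_series (\<nu> + 1) y - 1) * bessel_series \<nu> y \<and>
      (bessel_series (\<nu> + 1) y - 1) * bessel_series \<nu> y
        < q * (bessel_series (\<nu> + 1) y * (bessel_series \<nu> y - 1)))
    \<longleftrightarrow> p \<le> (\<nu> + 1) / (\<nu> + 2) \<and> q \<ge> 1"
proof
  assume "\<forall>y>0. p * (bessel_series (\<nu> + 1) y * (bessel_series \<nu> y - 1))
        < (bessel_series (\<nu> + 1) y - 1) * bessel_series \<nu> y \<and>
      (bessel_series (\<nu> + 1) y - 1) * bessel_series \<nu> y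
        < q * (bessel_series (\<nu> + 1) y * (bessel_series \<nu> y - 1))"
  then show "p \<le> (\<nu> + 1) / (\<nu> + 2) \<and> q \<ge> 1"
    using bessel_left_ineq_fails_near_0[OF assms, of p] bessel_right_ineq_fails_at_infinity[OF assms, of q]
    by (meson leD not_le)
next
  assume pq: "p \<le> (\<nu> + 1) / (\<nu> + 2) \<and> q \<ge> 1"
  have "\<nu> + 1 > 0" using assms by simp
  moreover have "p \<le> (\<nu> + 1) / (\<nu> + 1 + 1)" using pq by (simp add: add.assoc)
  moreover have \<nu>1: "\<nu> + 1 > -1" using assms by simp
  ultimately show "\<forall>y>0. p * (bessel_series (\<nu> + 1) y * (bessel_series \<nu> y - 1))
        < (bessel_series (\<nu> + 1) y - 1) * bessel_series \<nu> y \<and>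
      (bessel_series (\<nu> + 1) y - 1) * bessel_series \<nu> y
        < q * (bessel_series (\<nu> + 1) y * (bessel_series \<nu> y - 1))"
    using mixed_ratio_bounds[OF bessel_series_gt_1[OF \<nu>1] bessel_series_ineqs(1)[OF assms] _
        bessel_series_ineqs(2)[OF assms]] pq
    by blast
qed

theorem theorem4p1:
  fixes \<nu> p q :: real
  assumes "\<nu> > -1"
  shows "(\<forall>x::real. x > 0 \<longrightarrow>
            (1 - p) * calI (\<nu> + 1) x + p * (calI (\<nu> + 1) x / calI \<nu> x) > 1 \<and>
            1 > (1 - q) * calI (\<nu> + 1) x + q * (calI (\<nu> + 1) x / calI \<nu> x))
         \<longleftrightarrow> (p \<le> (\<nu> + 1) / (\<nu> + 2) \<and> q \<ge> 1)"
  unfolding calI_mixed_ratio_iff_left[OF assms] calI_mixed_ratio_iff_right[OF assms]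
  by (subst all_pos_square_iff) (rule bessel_series_mixed_bounds_iff[OF assms])

end
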